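(* Let $n\ge8$ be an integer. For every integer $k$ with $2\le k\le\lfloor n/2\rfloor-1$, the coefficient of the monomial $T_nT_{n+1-k}T_{k+1}$ in $R_{n+1}$ is $$c^{(n+1)}_{n,n+1-k,k+1}=-2(n+1)\binom{n}{k}.$$
   Context: Let $T_1,T_2,\dots$ be indeterminates, $T_\alpha=T_{\alpha_1}\cdots T_{\alpha_d}$. Define linear operators $L,H$ on monomials (constants sent to $0$): $L(T_{\alpha_1}\cdots T_{\alpha_r})=\sum_{1\le i<j\le r}T_{\alpha_1}\cdots T_{\alpha_i+1}\cdots T_{\alpha_j+1}\cdots T_{\alpha_r}$, $H(T_{\alpha_1}\cdots T_{\alpha_r})=-\frac12\sum_{k=1}^{r}\sum_{l=1}^{\alpha_k-1}\binom{\alpha_k}{l}T_{1+l}T_{1+\alpha_k-l}\prod_{i\ne k}T_{\alpha_i}$. For $n\ge2$ let $A_n=-\sum_{k=1}^{n-1}\binom{n}{k}T_{1+k}T_{1+n-k}T_n$; set $R_2=0$, $R_{n+1}=A_n+L(R_n)+H(R_n)$. $c^{(n)}_\alpha$ is the coefficient of the monomial $T_\alpha$ in $R_n$. *)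

theory Defs
  imports Complex_Main "HOL-Library.Multiset"
begin

text \<open>A polynomial in T_1, T_2, ... with rational coefficients is represented as a formal
  (unnormalised) finite sum: a list of terms (c, xs), meaning c * T_{xs!0} * ... * T_{xs!(r-1)}.\<close>

type_synonym tpoly = "(rat \<times> nat list) list"

definition pcoeff :: "tpoly \<Rightarrow> nat multiset \<Rightarrow> rat" where
  "pcoeff p \<alpha> = sum_list (map fst (filter (\<lambda>t. mset (snd t) = \<alpha>) p))"

definition Lmono :: "nat list \<Rightarrow> nat list list" where
  "Lmono xs = [xs[i := xs!i + 1, j := xs!j + 1]. i \<leftarrow> [0..<length xs], j \<leftarrow> [i+1..<length xs]]"

definition Lop :: "tpoly \<Rightarrow> tpoly" where
  "Lop p = concat (map (\<lambda>(c, xs). map (\<lambda>ys. (c, ys)) (Lmono xs)) p)"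

definition Hmono :: "nat list \<Rightarrow> (rat \<times> nat list) list" where
  "Hmono xs = [(- (1/2) * of_nat (xs!k choose l), (1 + l) # (1 + xs!k - l) # (take k xs @ drop (k+1) xs)).
                 k \<leftarrow> [0..<length xs], l \<leftarrow> [1..<xs!k]]"

definition Hop :: "tpoly \<Rightarrow> tpoly" where
  "Hop p = concat (map (\<lambda>(c, xs). map (\<lambda>(d, ys). (c * d, ys)) (Hmono xs)) p)"

definition Apoly :: "nat \<Rightarrow> tpoly" where
  "Apoly n = [(- of_nat (n choose k), [1 + k, 1 + n - k, n]). k \<leftarrow> [1..<n]]"

text \<open>R_2 = 0, R_{n+1} = A_n + L(R_n) + H(R_n) for n \<ge> 2 (R_0, R_1 are unused and set to 0).\<close>
fun Rpoly :: "nat \<Rightarrow> tpoly" where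
  "Rpoly 0 = []"
| "Rpoly (Suc n) = (if n < 2 then [] else Apoly n @ Lop (Rpoly n) @ Hop (Rpoly n))"

end

theory Submission imports Defs begin

text \<open>Every monomial of R_m has degree at least three and all its indices lie in [2, m), while
  H raises the degree. Hence the cubic part of R_{m+1} is that of A_m + L(R_m), and under L the
  monomial T_m T_j T_{m+2-j} can only come from T_{m-1} T_{j-1} T_{m+2-j} or T_{m-1} T_j T_{m+1-j},
  its index m being a raised m - 1. So the coefficients c(m, i) of T_{m-1} T_i T_{m+1-i} in R_m
  satisfy a first-order recurrence in m. Its solution -2m binom(m-1, i-1), halved at i = 2 and on
  the diagonal 2i = m + 1, is checked by Pascal's rule, starting from R_5.\<close>

lemma mset_two_eq_iff: "{#a, b#} = {#d, e#} \<longleftrightarrow> a = d \<and> b = e \<or> a = e \<and> b = d"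
  by (auto simp: add_eq_conv_diff)

lemma mset_three_eq_iff: "{#a, b, c#} = {#d, e, f#} \<longleftrightarrow>
    a = d \<and> b = e \<and> c = f \<or> a = d \<and> b = f \<and> c = e \<or> a = e \<and> b = d \<and> c = f \<or>
    a = e \<and> b = f \<and> c = d \<or> a = f \<and> b = d \<and> c = e \<or> a = f \<and> b = e \<and> c = d"
  (is "?lhs \<longleftrightarrow> ?rhs")
proof
  assume eq: ?lhs
  have "a \<in># {#d, e, f#}" by (simp flip: eq)
  then consider "a = d" | "a = e" | "a = f" by auto
  then show ?rhs
  proof cases
    case 1
    with eq have "{#b, c#} = {#e, f#}" by simp
    with 1 show ?thesis by (auto simp: mset_two_eq_iff)
  next
    case 2
    with eq have "{#b, c#} = {#d, f#}" by (simp add: add_mset_commute[of d e])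
    with 2 show ?thesis by (auto simp: mset_two_eq_iff)
  next
    case 3
    with eq have "{#b, c#} = {#d, e#}" by (simp add: add_mset_commute)
    with 3 show ?thesis by (auto simp: mset_two_eq_iff)
  qed
qed (auto simp: add_mset_commute)

lemma pcoeff_Nil [simp]: "pcoeff [] \<alpha> = 0"
  by (simp add: pcoeff_def)

lemma pcoeff_Cons [simp]:
  "pcoeff (t # p) \<alpha> = (if mset (snd t) = \<alpha> then fst t else 0) + pcoeff p \<alpha>"
  by (simp add: pcoeff_def)

lemma pcoeff_append [simp]: "pcoeff (p @ q) \<alpha> = pcoeff p \<alpha> + pcoeff q \<alpha>"
  by (simp add: pcoeff_def)

lemma pcoeff_eq_0: "(\<And>t. t \<in> set p \<Longrightarrow> mset (snd t) \<noteq> \<alpha>) \<Longrightarrow> pcoeff p \<alpha> = 0"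
  by (simp add: pcoeff_def filter_empty_conv)

lemma sum_list_weighted_eq_sum_pcoeff:
  fixes G :: "nat multiset \<Rightarrow> rat"
  assumes "finite B" and "\<And>t. t \<in> set p \<Longrightarrow> G (mset (snd t)) \<noteq> 0 \<Longrightarrow> mset (snd t) \<in> B"
  shows "(\<Sum>t\<leftarrow>p. fst t * G (mset (snd t))) = (\<Sum>\<beta>\<in>B. G \<beta> * pcoeff p \<beta>)"
  using assms(2)
proof (induction p)
  case Nil
  then show ?case by simp
next
  case (Cons t p)
  have "G \<beta> * pcoeff (t # p) \<beta> =
      (if mset (snd t) = \<beta> then G \<beta> * fst t else 0) + G \<beta> * pcoeff p \<beta>" for \<beta>
    by (simp add: distrib_left)
  then have "(\<Sum>\<beta>\<in>B. G \<beta> * pcoeff (t # p) \<beta>) =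
      (\<Sum>\<beta>\<in>B. if mset (snd t) = \<beta> then G \<beta> * fst t else 0) + (\<Sum>\<beta>\<in>B. G \<beta> * pcoeff p \<beta>)"
    by (simp add: sum.distrib)
  also have "(\<Sum>\<beta>\<in>B. if mset (snd t) = \<beta> then G \<beta> * fst t else 0) = fst t * G (mset (snd t))"
    using assms(1) Cons.prems[of t] by (auto simp: sum.delta)
  finally show ?case
    using Cons by simp
qed

subsection \<open>The operator \<open>L\<close> on cubic monomials\<close>

definition Lmono_count :: "nat list \<Rightarrow> nat multiset \<Rightarrow> nat" where
  "Lmono_count xs \<alpha> = length (filter (\<lambda>ys. mset ys = \<alpha>) (Lmono xs))"

text \<open>The coefficient of T_\<alpha> in L(T_\<beta>); the sorted list is just some representative of \<beta>.\<close>

definition Lmono_mset_count :: "nat multiset \<Rightarrow> nat multiset \<Rightarrow> nat" where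
  "Lmono_mset_count \<beta> \<alpha> = Lmono_count (sorted_list_of_multiset \<beta>) \<alpha>"

definition pair_raise_count :: "nat \<Rightarrow> nat \<Rightarrow> nat \<Rightarrow> nat multiset \<Rightarrow> nat" where
  "pair_raise_count x y z \<alpha> =
    (if {#Suc x, Suc y, z#} = \<alpha> then 1 else 0) + (if {#Suc x, y, Suc z#} = \<alpha> then 1 else 0) +
    (if {#x, Suc y, Suc z#} = \<alpha> then 1 else 0)"

lemma pair_raise_count_swap12: "pair_raise_count y x z \<alpha> = pair_raise_count x y z \<alpha>"
  unfolding pair_raise_count_def
  by (simp add: add_mset_commute[of "Suc x" "Suc y"] add_mset_commute[of x "Suc y"]
      add_mset_commute[of "Suc x" y])

lemma pair_raise_count_swap23: "pair_raise_count x z y \<alpha> = pair_raise_count x y z \<alpha>"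
  unfolding pair_raise_count_def
  by (simp add: add_mset_commute[of "Suc z" "Suc y"] add_mset_commute[of z "Suc y"]
      add_mset_commute[of "Suc z" y])

lemma Lmono_count_triple: "Lmono_count [x, y, z] \<alpha> = pair_raise_count x y z \<alpha>"
  by (simp add: Lmono_count_def Lmono_def upt_conv_Cons pair_raise_count_def)

lemma length_eq_3_iff: "length xs = 3 \<longleftrightarrow> (\<exists>x y z. xs = [x, y, z])"
  by (auto simp: length_Suc_conv numeral_3_eq_3)

lemma Lmono_count_triple_mset:
  assumes "mset xs = {#x, y, z#}"
  shows "Lmono_count xs \<alpha> = pair_raise_count x y z \<alpha>"
proof -
  have "length xs = 3"
    using arg_cong[OF assms, of size] by simp
  then obtain a b c where xs: "xs = [a, b, c]"
    by (auto simp: length_eq_3_iff)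
  with assms have "{#a, b, c#} = {#x, y, z#}"
    by simp
  then show ?thesis
    unfolding xs Lmono_count_triple mset_three_eq_iff
    by (elim disjE conjE; simp only: pair_raise_count_swap12 pair_raise_count_swap23)
qed

lemma Lmono_mset_count_triple: "Lmono_mset_count {#x, y, z#} \<alpha> = pair_raise_count x y z \<alpha>"
  unfolding Lmono_mset_count_def by (rule Lmono_count_triple_mset) simp

lemma set_Lmono:
  assumes "ys \<in> set (Lmono xs)"
  shows "length ys = length xs" and "y \<in> set ys \<Longrightarrow> \<exists>x\<in>set xs. y = x \<or> y = Suc x"
proof -
  obtain i j where ij: "i < j" "j < length xs" and ys: "ys = xs[i := Suc (xs!i), j := Suc (xs!j)]"
    using assms by (auto simp: Lmono_def Suc_le_eq)
  show "length ys = length xs"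
    by (simp add: ys)
  assume "y \<in> set ys"
  then have "y \<in> insert (Suc (xs!j)) (insert (Suc (xs!i)) (set xs))"
    unfolding ys by (meson set_update_subset_insert insert_mono subsetD)
  then show "\<exists>x\<in>set xs. y = x \<or> y = Suc x"
    using ij by auto
qed

lemma Lmono_count_eq_0: "length xs \<noteq> size \<alpha> \<Longrightarrow> Lmono_count xs \<alpha> = 0"
  by (auto simp: Lmono_count_def filter_empty_conv dest: set_Lmono(1))

lemma Lmono_count_eq_mset_count:
  assumes "size \<alpha> = 3"
  shows "Lmono_count xs \<alpha> = Lmono_mset_count (mset xs) \<alpha>"
proof (cases "length xs = 3")
  case True
  then obtain x y z where "xs = [x, y, z]"
    by (auto simp: length_eq_3_iff)
  then show ?thesis
    by (simp add: Lmono_count_triple Lmono_mset_count_triple)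
next
  case False
  moreover have "length (sorted_list_of_multiset (mset xs)) = length xs"
    by (metis mset_sorted_list_of_multiset size_mset)
  ultimately show ?thesis
    using assms by (simp add: Lmono_mset_count_def Lmono_count_eq_0)
qed

lemma pcoeff_map_const:
  "pcoeff (map (\<lambda>ys. (c, ys)) yss) \<alpha> = c * of_nat (length (filter (\<lambda>ys. mset ys = \<alpha>) yss))"
  by (induction yss) (auto simp: algebra_simps)

lemma pcoeff_Lop: "pcoeff (Lop p) \<alpha> = (\<Sum>t\<leftarrow>p. fst t * of_nat (Lmono_count (snd t) \<alpha>))"
  by (induction p) (auto simp: Lop_def pcoeff_map_const Lmono_count_def)

lemma pcoeff_Lop_cubic:
  assumes "size \<alpha> = 3" and "finite B"
    and "\<And>t. t \<in> set p \<Longrightarrow> Lmono_mset_count (mset (snd t)) \<alpha> \<noteq> 0 \<Longrightarrow> mset (snd t) \<in> B"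
  shows "pcoeff (Lop p) \<alpha> = (\<Sum>\<beta>\<in>B. of_nat (Lmono_mset_count \<beta> \<alpha>) * pcoeff p \<beta>)"
  unfolding pcoeff_Lop Lmono_count_eq_mset_count[OF assms(1)]
  by (rule sum_list_weighted_eq_sum_pcoeff) (use assms(2,3) in auto)

lemma set_Lop: "t \<in> set (Lop p) \<Longrightarrow> \<exists>c xs. (c, xs) \<in> set p \<and> snd t \<in> set (Lmono xs)"
  by (fastforce simp: Lop_def)

lemma set_Hmono:
  assumes "(d, ys) \<in> set (Hmono xs)"
  shows "length ys = Suc (length xs)"
    and "y \<in> set ys \<Longrightarrow> y \<in> set xs \<or> 2 \<le> y \<and> (\<exists>x\<in>set xs. y \<le> x)"
proof -
  obtain k l where kl: "k < length xs" "1 \<le> l" "l < xs!k"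
    and ys: "ys = (1 + l) # (1 + xs!k - l) # (take k xs @ drop (k+1) xs)"
    using assms by (auto simp: Hmono_def)
  show "length ys = Suc (length xs)"
    using kl by (simp add: ys)
  have rest: "set (take k xs @ drop (k+1) xs) \<subseteq> set xs"
    using set_take_subset set_drop_subset by (metis Un_subset_iff set_append)
  assume "y \<in> set ys"
  with kl rest show "y \<in> set xs \<or> 2 \<le> y \<and> (\<exists>x\<in>set xs. y \<le> x)"
    unfolding ys by (auto intro!: bexI[of _ "xs!k"])
qed

lemma set_Hop: "t \<in> set (Hop p) \<Longrightarrow> \<exists>c xs d. (c, xs) \<in> set p \<and> (d, snd t) \<in> set (Hmono xs)"
  by (fastforce simp: Hop_def)

lemma pcoeff_Hop_eq_0:
  assumes "\<And>t. t \<in> set p \<Longrightarrow> size \<alpha> \<le> length (snd t)"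
  shows "pcoeff (Hop p) \<alpha> = 0"
proof (rule pcoeff_eq_0)
  fix t assume "t \<in> set (Hop p)"
  then obtain c xs d where "(c, xs) \<in> set p" "(d, snd t) \<in> set (Hmono xs)"
    using set_Hop by blast
  then have "size \<alpha> < size (mset (snd t))"
    using assms set_Hmono(1) by fastforce
  then show "mset (snd t) \<noteq> \<alpha>"
    by auto
qed

subsection \<open>Shape of the monomials of \<open>R\<^sub>m\<close>\<close>

lemma Rpoly_term_bounds:
  assumes "t \<in> set (Rpoly m)"
  shows "3 \<le> length (snd t)" and "x \<in> set (snd t) \<Longrightarrow> 2 \<le> x \<and> x < m"
proof -
  have "3 \<le> length (snd t) \<and> (\<forall>x\<in>set (snd t). 2 \<le> x \<and> x < m)"
    using assms
  proof (induction m arbitrary: t)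
    case 0
    then show ?case by simp
  next
    case (Suc n)
    then have "\<not> n < 2" and "t \<in> set (Apoly n) \<or> t \<in> set (Lop (Rpoly n)) \<or> t \<in> set (Hop (Rpoly n))"
      by (auto split: if_splits)
    then consider "t \<in> set (Apoly n)"
      | c xs where "(c, xs) \<in> set (Rpoly n)" "snd t \<in> set (Lmono xs)"
      | c xs d where "(c, xs) \<in> set (Rpoly n)" "(d, snd t) \<in> set (Hmono xs)"
      using set_Lop set_Hop by blast
    then show ?case
    proof cases
      case 1
      then show ?thesis by (auto simp: Apoly_def)
    next
      case (2 c xs)
      with Suc.IH[of "(c, xs)"] show ?thesis
        using set_Lmono[OF 2(2)] by fastforce
    next
      case (3 c xs d)
      with Suc.IH[of "(c, xs)"] show ?thesis
        using set_Hmono[OF 3(2)] by fastforce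
    qed
  qed
  then show "3 \<le> length (snd t)" and "x \<in> set (snd t) \<Longrightarrow> 2 \<le> x \<and> x < m"
    by auto
qed

lemma pcoeff_Rpoly_eq_0: "x \<in># \<beta> \<Longrightarrow> x < 2 \<Longrightarrow> pcoeff (Rpoly m) \<beta> = 0"
  by (rule pcoeff_eq_0) (use Rpoly_term_bounds(2) in fastforce)

lemma pcoeff_Apoly:
  "pcoeff (Apoly n) \<alpha> = (\<Sum>k\<in>{1..<n}. if {#1 + k, 1 + n - k, n#} = \<alpha> then - of_nat (n choose k) else 0)"
proof -
  have "pcoeff (map f ks) \<alpha> = (\<Sum>k\<leftarrow>ks. if mset (snd (f k)) = \<alpha> then fst (f k) else 0)"
    for f :: "nat \<Rightarrow> rat \<times> nat list" and ks
    by (induction ks) auto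
  then show ?thesis
    by (simp add: Apoly_def sum_set_upt_conv_sum_list_nat[symmetric] cong: if_cong)
qed

lemma pcoeff_Apoly_cubic:
  assumes "2 \<le> j" and "2 * j \<le> m + 2"
  shows "pcoeff (Apoly m) {#m, j, m + 2 - j#} =
    - of_nat ((if 2 * j = m + 2 then 1 else 2) * (m choose (j - 1)))"
proof -
  have "{k \<in> {1..<m}. {#1 + k, 1 + m - k, m#} = {#m, j, m + 2 - j#}} = {j - 1, m + 1 - j}"
  proof (rule set_eqI)
    fix k
    have drop_m: "{#1 + k, 1 + m - k, m#} = {#m, j, m + 2 - j#} \<longleftrightarrow> {#1 + k, 1 + m - k#} = {#j, m + 2 - j#}"
      by (simp add: add_mset_commute)
    show "k \<in> {k \<in> {1..<m}. {#1 + k, 1 + m - k, m#} = {#m, j, m + 2 - j#}} \<longleftrightarrow> k \<in> {j - 1, m + 1 - j}"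
      unfolding mem_Collect_eq drop_m mset_two_eq_iff using assms by auto
  qed
  then have A: "pcoeff (Apoly m) {#m, j, m + 2 - j#} = (\<Sum>k\<in>{j - 1, m + 1 - j}. - of_nat (m choose k))"
    unfolding pcoeff_Apoly sum.inter_filter[OF finite_atLeastLessThan, symmetric] by simp
  show ?thesis
  proof (cases "2 * j = m + 2")
    case True
    then have "m + 1 - j = j - 1"
      by simp
    with A True show ?thesis
      by simp
  next
    case False
    then have "j - 1 \<noteq> m + 1 - j"
      by simp
    moreover have "m choose (m + 1 - j) = m choose (j - 1)"
      using assms binomial_symmetric[of "j - 1" m] by (simp add: Suc_diff_le)
    ultimately show ?thesis
      using A False by simp
  qed
qed

lemma pair_raise_preimage_cases:
  assumes "w < m" and "{#Suc u, Suc v, w#} = {#m, j, m + 2 - j#}"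
  shows "u = m - 1 \<and> v = j - 1 \<and> w = m + 2 - j \<or> u = m - 1 \<and> v = m + 1 - j \<and> w = j \<or>
    u = j - 1 \<and> v = m - 1 \<and> w = m + 2 - j \<or> u = m + 1 - j \<and> v = m - 1 \<and> w = j"
  using assms unfolding mset_three_eq_iff
  apply (elim disjE conjE)
  subgoal by (intro disjI1 conjI; linarith)
  subgoal by (intro disjI2 disjI1 conjI; linarith)
  subgoal by (intro disjI2 disjI1 conjI; linarith)
  subgoal by linarith
  subgoal by (intro disjI2 conjI; linarith)
  subgoal by linarith
  done

lemma pair_raise_preimage:
  assumes "w < m" and "{#Suc u, Suc v, w#} = {#m, j, m + 2 - j#}"
  shows "{#u, v, w#} = {#m - 1, j - 1, m + 2 - j#} \<or> {#u, v, w#} = {#m - 1, j, m + 1 - j#}"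
  using pair_raise_preimage_cases[OF assms] by (elim disjE conjE; simp add: add_mset_commute)

lemma pair_raise_count_preimage:
  assumes "x < m" "y < m" "z < m" and "pair_raise_count x y z {#m, j, m + 2 - j#} \<noteq> 0"
  shows "{#x, y, z#} \<in> {{#m - 1, j - 1, m + 2 - j#}, {#m - 1, j, m + 1 - j#}}"
proof -
  consider "{#Suc x, Suc y, z#} = {#m, j, m + 2 - j#}" | "{#Suc x, Suc z, y#} = {#m, j, m + 2 - j#}"
    | "{#Suc y, Suc z, x#} = {#m, j, m + 2 - j#}"
    using assms(4) unfolding pair_raise_count_def by (auto simp: add_mset_commute split: if_splits)
  then show ?thesis
  proof cases
    case 1
    then show ?thesis using pair_raise_preimage[OF assms(3)] by blast
  next
    case 2
    then have "{#x, z, y#} = {#m - 1, j - 1, m + 2 - j#} \<or> {#x, z, y#} = {#m - 1, j, m + 1 - j#}"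
      using pair_raise_preimage[OF assms(2)] by blast
    then show ?thesis by (auto simp: add_mset_commute)
  next
    case 3
    then have "{#y, z, x#} = {#m - 1, j - 1, m + 2 - j#} \<or> {#y, z, x#} = {#m - 1, j, m + 1 - j#}"
      using pair_raise_preimage[OF assms(1)] by blast
    then show ?thesis by (auto simp: add_mset_commute)
  qed
qed

lemma Lmono_mset_count_lower:
  assumes "5 \<le> m" "3 \<le> j" "2 * j \<le> m + 2"
  shows "Lmono_mset_count {#m - 1, j - 1, m + 2 - j#} {#m, j, m + 2 - j#} = (if j = 3 then 2 else 1)"
proof -
  have "{#Suc (m - 1), Suc (j - 1), m + 2 - j#} = {#m, j, m + 2 - j#}"
    using assms by simp
  moreover have "{#Suc (m - 1), j - 1, Suc (m + 2 - j)#} \<noteq> {#m, j, m + 2 - j#}"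
    using assms unfolding mset_three_eq_iff by auto
  moreover have "{#m - 1, Suc (j - 1), Suc (m + 2 - j)#} = {#m, j, m + 2 - j#} \<longleftrightarrow> j = 3"
    using assms unfolding mset_three_eq_iff by auto
  ultimately show ?thesis
    by (simp add: Lmono_mset_count_triple pair_raise_count_def)
qed

lemma Lmono_mset_count_upper:
  assumes "5 \<le> m" "2 \<le> j" "2 * j \<le> m + 1"
  shows "Lmono_mset_count {#m - 1, j, m + 1 - j#} {#m, j, m + 2 - j#} = (if 2 * j = m + 1 then 2 else 1)"
proof -
  have "{#Suc (m - 1), Suc j, m + 1 - j#} = {#m, j, m + 2 - j#} \<longleftrightarrow> 2 * j = m + 1"
    using assms unfolding mset_three_eq_iff by auto
  moreover have "{#Suc (m - 1), j, Suc (m + 1 - j)#} = {#m, j, m + 2 - j#}"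
    using assms by (simp add: Suc_diff_le)
  moreover have "{#m - 1, Suc j, Suc (m + 1 - j)#} \<noteq> {#m, j, m + 2 - j#}"
    using assms unfolding mset_three_eq_iff by auto
  ultimately show ?thesis
    by (simp add: Lmono_mset_count_triple pair_raise_count_def)
qed

lemma pcoeff_Rpoly_Suc_cubic_recurrence:
  fixes m j :: nat
  assumes "2 \<le> m"
  defines "\<alpha> \<equiv> {#m, j, m + 2 - j#}"
    and "\<beta>\<^sub>1 \<equiv> {#m - 1, j - 1, m + 2 - j#}" and "\<beta>\<^sub>2 \<equiv> {#m - 1, j, m + 1 - j#}"
  shows "pcoeff (Rpoly (Suc m)) \<alpha> =
    pcoeff (Apoly m) \<alpha> + (\<Sum>\<beta>\<in>{\<beta>\<^sub>1, \<beta>\<^sub>2}. of_nat (Lmono_mset_count \<beta> \<alpha>) * pcoeff (Rpoly m) \<beta>)"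
proof -
  have size: "size \<alpha> = 3"
    by (simp add: \<alpha>_def)
  have "pcoeff (Hop (Rpoly m)) \<alpha> = 0"
    by (rule pcoeff_Hop_eq_0) (simp add: size Rpoly_term_bounds(1))
  moreover have "pcoeff (Lop (Rpoly m)) \<alpha> =
      (\<Sum>\<beta>\<in>{\<beta>\<^sub>1, \<beta>\<^sub>2}. of_nat (Lmono_mset_count \<beta> \<alpha>) * pcoeff (Rpoly m) \<beta>)"
  proof (rule pcoeff_Lop_cubic[OF size])
    fix t assume t: "t \<in> set (Rpoly m)" and nz: "Lmono_mset_count (mset (snd t)) \<alpha> \<noteq> 0"
    then have "Lmono_count (snd t) \<alpha> \<noteq> 0"
      by (simp add: Lmono_count_eq_mset_count[OF size])
    then have "length (snd t) = 3"
      using Lmono_count_eq_0[of "snd t" \<alpha>] size by auto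
    then obtain x y z where xyz: "snd t = [x, y, z]"
      by (auto simp: length_eq_3_iff)
    have "x < m" "y < m" "z < m"
      using Rpoly_term_bounds(2)[OF t] xyz by auto
    moreover have "pair_raise_count x y z \<alpha> \<noteq> 0"
      using nz by (simp add: xyz Lmono_mset_count_triple)
    ultimately have "{#x, y, z#} \<in> {\<beta>\<^sub>1, \<beta>\<^sub>2}"
      unfolding \<alpha>_def \<beta>\<^sub>1_def \<beta>\<^sub>2_def by (rule pair_raise_count_preimage)
    then show "mset (snd t) \<in> {\<beta>\<^sub>1, \<beta>\<^sub>2}"
      by (simp add: xyz)
  qed simp
  moreover have "Rpoly (Suc m) = Apoly m @ Lop (Rpoly m) @ Hop (Rpoly m)"
    using \<open>2 \<le> m\<close> by simp
  ultimately show ?thesis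
    by (simp only: pcoeff_append add_0_right)
qed

subsection \<open>Solving the recurrence\<close>

definition cubic_coeff :: "nat \<Rightarrow> nat \<Rightarrow> rat" where
  "cubic_coeff m i = - of_nat ((if i = 2 \<or> 2 * i = m + 1 then 1 else 2) * m * ((m - 1) choose (i - 1)))"

lemma cubic_coeff_lower_contribution:
  assumes "5 \<le> m" "3 \<le> j" "2 * j \<le> m + 2"
  shows "of_nat (Lmono_mset_count {#m - 1, j - 1, m + 2 - j#} {#m, j, m + 2 - j#}) * cubic_coeff m (j - 1) =
    - of_nat (2 * m * ((m - 1) choose (j - 2)))"
  using Lmono_mset_count_lower[OF assms] assms by (auto simp: cubic_coeff_def numeral_2_eq_2)

lemma cubic_coeff_upper_contribution:
  assumes "5 \<le> m" "3 \<le> j" "2 * j \<le> m + 1"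
  shows "of_nat (Lmono_mset_count {#m - 1, j, m + 1 - j#} {#m, j, m + 2 - j#}) * cubic_coeff m j =
    - of_nat (2 * m * ((m - 1) choose (j - 1)))"
  using Lmono_mset_count_upper[OF assms(1) _ assms(3)] assms by (auto simp: cubic_coeff_def)

lemma pcoeff_Rpoly_Suc_eq_cubic_coeff:
  assumes "5 \<le> m"
    and IH: "\<And>i. 2 \<le> i \<Longrightarrow> 2 * i \<le> m + 1 \<Longrightarrow> pcoeff (Rpoly m) {#m - 1, i, m + 1 - i#} = cubic_coeff m i"
    and "2 \<le> j" "2 * j \<le> m + 2"
  shows "pcoeff (Rpoly (Suc m)) {#m, j, m + 2 - j#} = cubic_coeff (Suc m) j"
proof -
  define \<alpha> \<beta>\<^sub>1 \<beta>\<^sub>2 where "\<alpha> = {#m, j, m + 2 - j#}"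
    and "\<beta>\<^sub>1 = {#m - 1, j - 1, m + 2 - j#}" and "\<beta>\<^sub>2 = {#m - 1, j, m + 1 - j#}"
  let ?term = "\<lambda>\<beta>. of_nat (Lmono_mset_count \<beta> \<alpha>) * pcoeff (Rpoly m) \<beta>"
  have rec: "pcoeff (Rpoly (Suc m)) \<alpha> = pcoeff (Apoly m) \<alpha> + (\<Sum>\<beta>\<in>{\<beta>\<^sub>1, \<beta>\<^sub>2}. ?term \<beta>)"
    unfolding \<alpha>_def \<beta>\<^sub>1_def \<beta>\<^sub>2_def using assms(1) by (intro pcoeff_Rpoly_Suc_cubic_recurrence) simp
  have A: "pcoeff (Apoly m) \<alpha> = - of_nat ((if 2 * j = m + 2 then 1 else 2) * (m choose (j - 1)))"
    unfolding \<alpha>_def using assms(3,4) by (rule pcoeff_Apoly_cubic)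
  have pascal: "m choose (j - 1) = ((m - 1) choose (j - 2)) + ((m - 1) choose (j - 1))"
    using assms choose_reduce_nat[of m "j - 1"] by (simp add: numeral_2_eq_2)
  have lower: "?term \<beta>\<^sub>1 = - of_nat (2 * m * ((m - 1) choose (j - 2)))" if "3 \<le> j"
  proof -
    have "m + 1 - (j - 1) = m + 2 - j"
      using assms by simp
    then have "pcoeff (Rpoly m) \<beta>\<^sub>1 = cubic_coeff m (j - 1)"
      using IH[of "j - 1"] assms that by (simp add: \<beta>\<^sub>1_def)
    then show ?thesis
      using cubic_coeff_lower_contribution[OF assms(1) that assms(4)] by (simp add: \<alpha>_def \<beta>\<^sub>1_def)
  qed
  consider (two) "j = 2" | (diagonal) "3 \<le> j" "2 * j = m + 2" | (generic) "3 \<le> j" "2 * j \<le> m + 1"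
    using assms by linarith
  then show ?thesis
  proof cases
    case two
    have "1 \<in># \<beta>\<^sub>1" "1 \<notin># \<beta>\<^sub>2"
      using two assms(1) by (auto simp: \<beta>\<^sub>1_def \<beta>\<^sub>2_def)
    then have "\<beta>\<^sub>1 \<noteq> \<beta>\<^sub>2" and "pcoeff (Rpoly m) \<beta>\<^sub>1 = 0"
      using pcoeff_Rpoly_eq_0 by auto
    moreover have "?term \<beta>\<^sub>2 = - of_nat (m * (m - 1))"
      using Lmono_mset_count_upper[OF assms(1,3)] IH[of 2] two assms(1)
      by (simp add: \<alpha>_def \<beta>\<^sub>2_def cubic_coeff_def)
    ultimately show ?thesis
      unfolding \<alpha>_def[symmetric] rec A using two assms(1)
      by (simp add: cubic_coeff_def algebra_simps)
  next
    case diagonal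
    then have "m + 2 - j = j" "m + 1 - j = j - 1"
      by auto
    then have "\<beta>\<^sub>1 = \<beta>\<^sub>2"
      by (simp add: \<beta>\<^sub>1_def \<beta>\<^sub>2_def add_mset_commute)
    moreover have "(m - 1) choose (j - 1) = (m - 1) choose (j - 2)"
    proof -
      have "j - 2 \<le> m - 1" "m - 1 - (j - 2) = j - 1"
        using diagonal by auto
      then show ?thesis
        using binomial_symmetric[of "j - 2" "m - 1"] by simp
    qed
    ultimately show ?thesis
      unfolding \<alpha>_def[symmetric] rec A using diagonal lower pascal
      by (simp add: cubic_coeff_def algebra_simps)
  next
    case generic
    have "\<beta>\<^sub>1 \<noteq> \<beta>\<^sub>2"
      unfolding \<beta>\<^sub>1_def \<beta>\<^sub>2_def mset_three_eq_iff using generic by arith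
    moreover have "?term \<beta>\<^sub>2 = - of_nat (2 * m * ((m - 1) choose (j - 1)))"
      using IH[OF assms(3) generic(2)] cubic_coeff_upper_contribution[OF assms(1) generic]
      by (simp add: \<alpha>_def \<beta>\<^sub>2_def)
    ultimately show ?thesis
      unfolding \<alpha>_def[symmetric] rec A using generic lower pascal
      by (simp add: cubic_coeff_def algebra_simps)
  qed
qed

lemma pcoeff_Rpoly_eq_cubic_coeff:
  assumes "5 \<le> m" "2 \<le> i" "2 * i \<le> m + 1"
  shows "pcoeff (Rpoly m) {#m - 1, i, m + 1 - i#} = cubic_coeff m i"
  using assms
proof (induction m arbitrary: i rule: nat_induct_at_least)
  case base
  have "pcoeff (Rpoly 5) {#4, 2, 4#} = cubic_coeff 5 2" "pcoeff (Rpoly 5) {#4, 3, 3#} = cubic_coeff 5 3"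
    by code_simp+
  moreover have "i = 2 \<or> i = 3"
    using base by auto
  ultimately show ?case
    by auto
next
  case (Suc m)
  then show ?case
    using pcoeff_Rpoly_Suc_eq_cubic_coeff[OF Suc.hyps Suc.IH, of i] by (simp del: Rpoly.simps)
qed

theorem mainTheorem15:
  fixes n k :: nat
  assumes "n \<ge> 8" and "2 \<le> k" and "k \<le> n div 2 - 1"
  shows "pcoeff (Rpoly (n + 1)) {#n, n + 1 - k, k + 1#} = - 2 * of_nat (n + 1) * of_nat (n choose k)"
proof -
  have mset: "{#n, n + 1 - k, k + 1#} = {#n + 1 - 1, k + 1, n + 1 + 1 - (k + 1)#}"
    by (simp add: add_mset_commute)
  have "pcoeff (Rpoly (n + 1)) {#n + 1 - 1, k + 1, n + 1 + 1 - (k + 1)#} = cubic_coeff (n + 1) (k + 1)"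
    by (rule pcoeff_Rpoly_eq_cubic_coeff) (use assms in auto)
  also have "\<dots> = - 2 * of_nat (n + 1) * of_nat (n choose k)"
  proof -
    have "k + 1 \<noteq> 2" "2 * (k + 1) \<noteq> n + 1 + 1"
      using assms by auto
    then show ?thesis
      by (simp add: cubic_coeff_def algebra_simps)
  qed
  finally show ?thesis
    unfolding mset .
qed

end
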